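(* Let $G$ be a finite group and let $S$ be a set of non-identity arrows of $G$. Let $(K,H)$ be a non-identity arrow of $G$ and let $N=P(K)$. If $(K,H)\in\langle S\rangle$, then there exists a subset $S'\subseteq S_N$ such that $(K,H)\in\langle S'\rangle$ and at most one element of $S'$ is not contained in $S_{N+1}$.
   Context: For a finite group $G$, an arrow is a pair $(K,H)$ of subgroups with $K\leqslant H$; it is an identity arrow if $K=H$. A $G$-transfer system is a set of arrows containing all identity arrows and closed under composition ($(A,B),(B,C)\Rightarrow(A,C)$), conjugation ($(A,B)\Rightarrow(gAg^{-1},gBg^{-1})$ for all $g\in G$) and restriction ($(A,B)$ and $L\leqslant B\Rightarrow(A\cap L,L)$). For a set $S$ of arrows, $\langle S\rangle$ is the smallest transfer system containing $S$. For a subgroup $K$, $P(K)$ is the sum of the exponents in the prime factorization of $|K|$. For $N\in\mathbb{N}$, $S_N=\{(K,H)\in S: P(K)\geqslant N\}$. *)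

theory Defs
  imports "HOL-Algebra.Algebra" "HOL-Computational_Algebra.Primes"
begin

definition arrows :: "('a, 'b) monoid_scheme \<Rightarrow> ('a set \<times> 'a set) set" where
  "arrows G = {(K, H). subgroup K G \<and> subgroup H G \<and> K \<subseteq> H}"

definition conj_set :: "('a, 'b) monoid_scheme \<Rightarrow> 'a \<Rightarrow> 'a set \<Rightarrow> 'a set" where
  "conj_set G g A = (\<lambda>a. g \<otimes>\<^bsub>G\<^esub> a \<otimes>\<^bsub>G\<^esub> inv\<^bsub>G\<^esub> g) ` A"

definition transfer_system :: "('a, 'b) monoid_scheme \<Rightarrow> ('a set \<times> 'a set) set \<Rightarrow> bool" where
  "transfer_system G T \<longleftrightarrow>
     T \<subseteq> arrows G \<and>
     (\<forall>H. subgroup H G \<longrightarrow> (H, H) \<in> T) \<and>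
     (\<forall>A B C. (A, B) \<in> T \<longrightarrow> (B, C) \<in> T \<longrightarrow> (A, C) \<in> T) \<and>
     (\<forall>A B g. (A, B) \<in> T \<longrightarrow> g \<in> carrier G \<longrightarrow> (conj_set G g A, conj_set G g B) \<in> T) \<and>
     (\<forall>A B L. (A, B) \<in> T \<longrightarrow> subgroup L G \<longrightarrow> L \<subseteq> B \<longrightarrow> (A \<inter> L, L) \<in> T)"

definition gen_ts :: "('a, 'b) monoid_scheme \<Rightarrow> ('a set \<times> 'a set) set \<Rightarrow> ('a set \<times> 'a set) set" where
  "gen_ts G S = \<Inter> {T. transfer_system G T \<and> S \<subseteq> T}"

definition Pexp :: "'a set \<Rightarrow> nat" where
  "Pexp K = size (prime_factorization (card K))"

definition arrows_ge :: "('a set \<times> 'a set) set \<Rightarrow> nat \<Rightarrow> ('a set \<times> 'a set) set" where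
  "arrows_ge S N = {(K, H) \<in> S. Pexp K \<ge> N}"

end

theory Submission
  imports Defs
begin

text \<open>
  Call an arrow \<open>(K, H)\<close> good if, with \<open>N = P(K)\<close>, it lies in \<open>\<langle>S'\<rangle>\<close> for some
  \<open>S' \<subseteq> S\<^sub>N\<close> having at most one element outside \<open>S\<^sub>N\<^sub>+\<^sub>1\<close>. The good arrows form a
  transfer system containing \<open>S\<close>, hence they contain \<open>\<langle>S\<rangle>\<close>. For the composite of good
  arrows \<open>(A, B)\<close> and \<open>(B, C)\<close> with \<open>A \<noteq> B\<close>, Lagrange gives \<open>P(A) < P(B)\<close>, so every
  generator used for \<open>(B, C)\<close> has level above \<open>P(A)\<close> and the union of the two generating
  sets shows that \<open>(A, C)\<close> is good. Restricting \<open>(A, B)\<close> to \<open>L\<close> either leaves \<open>A\<close>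
  unchanged or lowers \<open>P\<close> strictly, and then no generator is at the bottom level at all;
  conjugation preserves orders.
\<close>

lemma size_prime_factorization_less:
  fixes m n :: nat
  assumes "m dvd n" "n \<noteq> 0" "m \<noteq> n"
  shows "size (prime_factorization m) < size (prime_factorization n)"
proof -
  obtain k where n: "n = m * k" using assms(1) by blast
  with assms have "m \<noteq> 0" "k \<noteq> 0" "k \<noteq> 1" by auto
  then have "prime_factorization k \<noteq> {#}"
    by (simp add: prime_factorization_empty_iff)
  then have "size (prime_factorization k) > 0"
    by (metis nonempty_has_size)
  moreover have "prime_factorization n = prime_factorization m + prime_factorization k"
    using \<open>m \<noteq> 0\<close> \<open>k \<noteq> 0\<close> by (simp add: n prime_factorization_mult)
  ultimately show ?thesis by simp
qed

lemma
  assumes "transfer_system G T"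
  shows transfer_system_subset_arrows: "T \<subseteq> arrows G"
    and transfer_system_refl: "subgroup H G \<Longrightarrow> (H, H) \<in> T"
    and transfer_system_trans: "(A, B) \<in> T \<Longrightarrow> (B, C) \<in> T \<Longrightarrow> (A, C) \<in> T"
    and transfer_system_conj:
      "(A, B) \<in> T \<Longrightarrow> g \<in> carrier G \<Longrightarrow> (conj_set G g A, conj_set G g B) \<in> T"
    and transfer_system_restrict:
      "(A, B) \<in> T \<Longrightarrow> subgroup L G \<Longrightarrow> L \<subseteq> B \<Longrightarrow> (A \<inter> L, L) \<in> T"
  using assms unfolding transfer_system_def by blast+

lemma transfer_system_Inter:
  assumes "\<F> \<noteq> {}" and ts: "\<And>T. T \<in> \<F> \<Longrightarrow> transfer_system G T"
  shows "transfer_system G (\<Inter>\<F>)"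
  unfolding transfer_system_def
proof (intro conjI allI impI)
  show "\<Inter>\<F> \<subseteq> arrows G"
    using assms transfer_system_subset_arrows by blast
qed (blast intro: transfer_system_refl[OF ts] transfer_system_trans[OF ts]
      transfer_system_conj[OF ts] transfer_system_restrict[OF ts])+

lemma gen_ts_least: "transfer_system G T \<Longrightarrow> S \<subseteq> T \<Longrightarrow> gen_ts G S \<subseteq> T"
  unfolding gen_ts_def by blast

lemma gen_ts_superset: "S \<subseteq> gen_ts G S"
  unfolding gen_ts_def by blast

lemma gen_ts_mono: "S \<subseteq> S' \<Longrightarrow> gen_ts G S \<subseteq> gen_ts G S'"
  unfolding gen_ts_def by blast

lemma arrows_ge_subset: "arrows_ge S n \<subseteq> S"
  unfolding arrows_ge_def by blast

lemma arrows_ge_antimono: "n \<le> m \<Longrightarrow> arrows_ge S m \<subseteq> arrows_ge S n"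
  unfolding arrows_ge_def by auto

context group
begin

lemma card_subgroup_dvd:
  assumes "subgroup A G" "subgroup B G" "A \<subseteq> B"
  shows "card A dvd card B"
proof -
  have "group (G\<lparr>carrier := B\<rparr>)" "subgroup A (G\<lparr>carrier := B\<rparr>)"
    using assms subgroup_imp_group subgroup_incl by auto
  then have "card (rcosets\<^bsub>G\<lparr>carrier := B\<rparr>\<^esub> A) * card A = card B"
    using group.lagrange by (fastforce simp: order_def)
  then show ?thesis by (metis dvd_triv_right)
qed

lemma Pexp_less:
  assumes "finite (carrier G)" "subgroup A G" "subgroup B G" "A \<subset> B"
  shows "Pexp A < Pexp B"
proof -
  have "finite B" using assms(1,3) subgroup.subset finite_subset by metis
  then have "card A \<noteq> card B" using psubset_card_mono assms(4) by (metis less_irrefl)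
  moreover have "card B \<noteq> 0"
    using \<open>finite B\<close> subgroup.one_closed[OF assms(3)] by auto
  ultimately show ?thesis
    unfolding Pexp_def using assms(2-4) card_subgroup_dvd size_prime_factorization_less by blast
qed

lemma conj_set_eq_coset: "conj_set G g A = g <# A #> inv g"
  unfolding conj_set_def l_coset_def r_coset_def by auto

lemma subgroup_conj_set:
  "g \<in> carrier G \<Longrightarrow> subgroup A G \<Longrightarrow> subgroup (conj_set G g A) G"
  unfolding conj_set_eq_coset by (rule subgroup_conjugation_is_surj2)

lemma Pexp_conj_set:
  assumes "g \<in> carrier G" "A \<subseteq> carrier G"
  shows "Pexp (conj_set G g A) = Pexp A"
proof -
  have "inj_on (\<lambda>a. g \<otimes> a \<otimes> inv g) A"
  proof (rule inj_onI)
    fix x y assume "x \<in> A" "y \<in> A" "g \<otimes> x \<otimes> inv g = g \<otimes> y \<otimes> inv g"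
    moreover have "x \<in> carrier G" "y \<in> carrier G" using \<open>x \<in> A\<close> \<open>y \<in> A\<close> assms(2) by auto
    ultimately show "x = y" using assms(1) by simp
  qed
  then show ?thesis unfolding Pexp_def conj_set_def by (simp add: card_image)
qed

lemma transfer_system_arrows: "transfer_system G (arrows G)"
proof -
  have "conj_set G g A \<subseteq> conj_set G g B" if "A \<subseteq> B" for g A B
    using that unfolding conj_set_def by blast
  then show ?thesis
    unfolding transfer_system_def arrows_def
    using subgroup_conj_set subgroups_Inter_pair by auto
qed

lemma transfer_system_gen_ts:
  assumes "S \<subseteq> arrows G"
  shows "transfer_system G (gen_ts G S)"
  unfolding gen_ts_def using assms transfer_system_arrows
  by (intro transfer_system_Inter) auto

end

definition subsingleton :: "'a set \<Rightarrow> bool" where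
  "subsingleton A \<longleftrightarrow> (\<forall>x \<in> A. \<forall>y \<in> A. x = y)"

lemma subsingleton_empty: "subsingleton {}"
  unfolding subsingleton_def by blast

lemma subsingleton_singleton: "subsingleton {x}"
  unfolding subsingleton_def by blast

lemma subsingleton_subset: "A \<subseteq> B \<Longrightarrow> subsingleton B \<Longrightarrow> subsingleton A"
  unfolding subsingleton_def by blast

definition good_arrow ::
  "('a, 'b) monoid_scheme \<Rightarrow> ('a set \<times> 'a set) set \<Rightarrow> 'a set \<Rightarrow> 'a set \<Rightarrow> bool" where
  "good_arrow G S K H \<longleftrightarrow> (\<exists>S'. S' \<subseteq> arrows_ge S (Pexp K) \<and> (K, H) \<in> gen_ts G S' \<and>
     subsingleton (S' - arrows_ge S (Pexp K + 1)))"

lemma good_arrowI: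
  assumes "S' \<subseteq> arrows_ge S (Pexp K)" "(K, H) \<in> gen_ts G S'"
    "subsingleton (S' - arrows_ge S (Pexp K + 1))"
  shows "good_arrow G S K H"
  unfolding good_arrow_def by (intro exI[of _ S'] conjI assms)

lemma good_arrowE:
  assumes "good_arrow G S K H"
  obtains S' where "S' \<subseteq> arrows_ge S (Pexp K)" "(K, H) \<in> gen_ts G S'"
    "subsingleton (S' - arrows_ge S (Pexp K + 1))"
  using assms unfolding good_arrow_def by blast

lemma good_arrow_of_mem:
  assumes "(K, H) \<in> S"
  shows "good_arrow G S K H"
proof (rule good_arrowI)
  show "{(K, H)} \<subseteq> arrows_ge S (Pexp K)"
    using assms unfolding arrows_ge_def by simp
  show "(K, H) \<in> gen_ts G {(K, H)}"
    using gen_ts_superset by blast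
  show "subsingleton ({(K, H)} - arrows_ge S (Pexp K + 1))"
    by (rule subsingleton_subset[OF Diff_subset subsingleton_singleton])
qed

lemma good_arrow_if_above:
  assumes "S' \<subseteq> arrows_ge S (Pexp K + 1)" "(K, H) \<in> gen_ts G S'"
  shows "good_arrow G S K H"
proof (rule good_arrowI[OF _ assms(2)])
  show "S' \<subseteq> arrows_ge S (Pexp K)"
    using assms(1) arrows_ge_antimono[of "Pexp K" "Pexp K + 1" S] by simp
  show "subsingleton (S' - arrows_ge S (Pexp K + 1))"
    using assms(1) by (intro subsingleton_subset[OF _ subsingleton_empty]) blast
qed

context group
begin

lemma good_arrow_refl: "subgroup K G \<Longrightarrow> good_arrow G S K K"
  using transfer_system_refl[OF transfer_system_gen_ts[OF empty_subsetI]]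
  by (intro good_arrow_if_above[of "{}"]) simp_all

lemma good_arrow_trans:
  assumes S: "S \<subseteq> arrows G" and fin: "finite (carrier G)" and AB: "(A, B) \<in> arrows G"
    and good: "good_arrow G S A B" "good_arrow G S B C"
  shows "good_arrow G S A C"
proof (cases "A = B")
  case True
  with good(2) show ?thesis by simp
next
  case False
  with AB fin have "Pexp A < Pexp B" using Pexp_less unfolding arrows_def by auto
  obtain S1 where S1: "S1 \<subseteq> arrows_ge S (Pexp A)" "(A, B) \<in> gen_ts G S1"
    "subsingleton (S1 - arrows_ge S (Pexp A + 1))"
    using good(1) by (rule good_arrowE)
  obtain S2 where S2: "S2 \<subseteq> arrows_ge S (Pexp B)" "(B, C) \<in> gen_ts G S2"
    using good(2) by (rule good_arrowE)
  have S2_above: "S2 \<subseteq> arrows_ge S (Pexp A + 1)"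
    using S2(1) arrows_ge_antimono[of "Pexp A + 1" "Pexp B" S] \<open>Pexp A < Pexp B\<close> by auto
  show ?thesis
  proof (rule good_arrowI)
    show S12: "S1 \<union> S2 \<subseteq> arrows_ge S (Pexp A)"
      using S1(1) S2_above arrows_ge_antimono[of "Pexp A" "Pexp A + 1" S] by auto
    then have "transfer_system G (gen_ts G (S1 \<union> S2))"
      using S arrows_ge_subset transfer_system_gen_ts by (meson subset_trans)
    moreover have "(A, B) \<in> gen_ts G (S1 \<union> S2)" "(B, C) \<in> gen_ts G (S1 \<union> S2)"
      using S1(2) S2(2) gen_ts_mono[of _ "S1 \<union> S2" G] by auto
    ultimately show "(A, C) \<in> gen_ts G (S1 \<union> S2)"
      by (rule transfer_system_trans)
    have "S1 \<union> S2 - arrows_ge S (Pexp A + 1) = S1 - arrows_ge S (Pexp A + 1)"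
      using S2_above by blast
    then show "subsingleton (S1 \<union> S2 - arrows_ge S (Pexp A + 1))"
      using S1(3) by simp
  qed
qed

lemma good_arrow_conj:
  assumes S: "S \<subseteq> arrows G" and "subgroup A G" "g \<in> carrier G" "good_arrow G S A B"
  shows "good_arrow G S (conj_set G g A) (conj_set G g B)"
proof -
  obtain S' where S': "S' \<subseteq> arrows_ge S (Pexp A)" "(A, B) \<in> gen_ts G S'"
    "subsingleton (S' - arrows_ge S (Pexp A + 1))"
    using assms(4) by (rule good_arrowE)
  have "transfer_system G (gen_ts G S')"
    using S S'(1) arrows_ge_subset transfer_system_gen_ts by (meson subset_trans)
  then have "(conj_set G g A, conj_set G g B) \<in> gen_ts G S'"
    using S'(2) assms(3) by (rule transfer_system_conj)
  moreover have "Pexp (conj_set G g A) = Pexp A"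
    using Pexp_conj_set assms(2,3) subgroup.subset by blast
  ultimately show ?thesis
    using S'(1,3) by (intro good_arrowI[of S']) simp_all
qed

lemma good_arrow_restrict:
  assumes S: "S \<subseteq> arrows G" and fin: "finite (carrier G)"
    and "subgroup A G" "subgroup L G" "L \<subseteq> B" "good_arrow G S A B"
  shows "good_arrow G S (A \<inter> L) L"
proof -
  obtain S' where S': "S' \<subseteq> arrows_ge S (Pexp A)" "(A, B) \<in> gen_ts G S'"
    "subsingleton (S' - arrows_ge S (Pexp A + 1))"
    using assms(6) by (rule good_arrowE)
  have "transfer_system G (gen_ts G S')"
    using S S'(1) arrows_ge_subset transfer_system_gen_ts by (meson subset_trans)
  then have restricted: "(A \<inter> L, L) \<in> gen_ts G S'"
    using S'(2) assms(4,5) by (rule transfer_system_restrict)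
  show ?thesis
  proof (cases "A \<subseteq> L")
    case True
    then have "A \<inter> L = A" by blast
    with S' restricted show ?thesis by (intro good_arrowI[of S']) simp_all
  next
    case False
    then have "Pexp (A \<inter> L) < Pexp A"
      using Pexp_less[OF fin subgroups_Inter_pair[OF assms(3,4)] assms(3)] by blast
    then have "S' \<subseteq> arrows_ge S (Pexp (A \<inter> L) + 1)"
      using S'(1) arrows_ge_antimono[of "Pexp (A \<inter> L) + 1" "Pexp A" S] by auto
    then show ?thesis using restricted by (rule good_arrow_if_above)
  qed
qed

lemma transfer_system_good_arrows:
  assumes "S \<subseteq> arrows G" "finite (carrier G)"
  shows "transfer_system G {(K, H) \<in> arrows G. good_arrow G S K H}"
  unfolding transfer_system_def
proof (intro conjI allI impI)
  fix A B C
  assume "(A, B) \<in> {(K, H) \<in> arrows G. good_arrow G S K H}"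
    and "(B, C) \<in> {(K, H) \<in> arrows G. good_arrow G S K H}"
  then have "(A, B) \<in> arrows G" "(B, C) \<in> arrows G" "good_arrow G S A B" "good_arrow G S B C"
    by auto
  then show "(A, C) \<in> {(K, H) \<in> arrows G. good_arrow G S K H}"
    using good_arrow_trans[OF assms] transfer_system_trans[OF transfer_system_arrows] by simp
next
  fix A B g
  assume "(A, B) \<in> {(K, H) \<in> arrows G. good_arrow G S K H}" and g: "g \<in> carrier G"
  then have "(A, B) \<in> arrows G" "subgroup A G" "good_arrow G S A B"
    unfolding arrows_def by auto
  then show "(conj_set G g A, conj_set G g B) \<in> {(K, H) \<in> arrows G. good_arrow G S K H}"
    using good_arrow_conj[OF assms(1)] transfer_system_conj[OF transfer_system_arrows] g by simp
next
  fix A B L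
  assume "(A, B) \<in> {(K, H) \<in> arrows G. good_arrow G S K H}" and L: "subgroup L G" "L \<subseteq> B"
  then have "(A, B) \<in> arrows G" "subgroup A G" "good_arrow G S A B"
    unfolding arrows_def by auto
  then show "(A \<inter> L, L) \<in> {(K, H) \<in> arrows G. good_arrow G S K H}"
    using good_arrow_restrict[OF assms] transfer_system_restrict[OF transfer_system_arrows] L by simp
qed (use good_arrow_refl arrows_def in auto)

end

theorem lemma2p12:
  fixes G :: "('a, 'b) monoid_scheme"
    and S :: "('a set \<times> 'a set) set"
    and K H :: "'a set"
  assumes "group G"
    and "finite (carrier G)"
    and "S \<subseteq> arrows G"
    and "\<forall>(A, B) \<in> S. A \<noteq> B"
    and "(K, H) \<in> arrows G"
    and "K \<noteq> H"
    and "N = Pexp K"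
    and "(K, H) \<in> gen_ts G S"
  shows "\<exists>S'. S' \<subseteq> arrows_ge S N \<and> (K, H) \<in> gen_ts G S' \<and>
           (\<forall>x \<in> S' - arrows_ge S (N + 1). \<forall>y \<in> S' - arrows_ge S (N + 1). x = y)"
proof -
  interpret group G by fact
  have "S \<subseteq> {(K, H) \<in> arrows G. good_arrow G S K H}"
    using assms(3) good_arrow_of_mem by auto
  then have "gen_ts G S \<subseteq> {(K, H) \<in> arrows G. good_arrow G S K H}"
    using gen_ts_least transfer_system_good_arrows assms(2,3) by blast
  then have "good_arrow G S K H" using assms(8) by blast
  then show ?thesis unfolding good_arrow_def subsingleton_def assms(7) .
qed

end
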